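(* Let $F$ be a finite field of characteristic $3$. Let $k\ge 0$ be an integer, $m=3k+1$, and $t$ an integer with $t^3\equiv 1\pmod m$ and $\gcd(m,t-1)=1$. Let $G=T_{3m}=\langle x,y\mid x^m=y^3=1,\ y^{-1}xy=x^t\rangle$ (of order $3m$) and $FG$ its group algebra. Let $s\in FG$ be the sum of all elements of $G$ whose order is a power of $3$ (including the identity), and let $\mathrm{Anh}(s)=\{\alpha\in FG\mid \alpha s=s\alpha=0\}$. Then $\mathrm{Anh}(s)$ is a nilpotent ideal of $FG$. *)

theory Defs
  imports "HOL-Algebra.Algebra"
begin

text \<open>Group algebra FG of a finite group G (HOL-Algebra) over a field of type 'a.
  Elements are functions carrier G -> 'a, extended by 0 outside the carrier.\<close>

definition ga_carrier :: "('g, 'b) monoid_scheme \<Rightarrow> ('g \<Rightarrow> 'a::field) set" where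
  "ga_carrier G = {f. \<forall>g. g \<notin> carrier G \<longrightarrow> f g = 0}"

definition ga_zero :: "'g \<Rightarrow> 'a::field" where
  "ga_zero = (\<lambda>_. 0)"

definition ga_one :: "('g, 'b) monoid_scheme \<Rightarrow> 'g \<Rightarrow> 'a::field" where
  "ga_one G = (\<lambda>g. if g = \<one>\<^bsub>G\<^esub> then 1 else 0)"

definition ga_mult :: "('g, 'b) monoid_scheme \<Rightarrow> ('g \<Rightarrow> 'a::field) \<Rightarrow> ('g \<Rightarrow> 'a) \<Rightarrow> 'g \<Rightarrow> 'a" where
  "ga_mult G f h = (\<lambda>g. if g \<in> carrier G
      then (\<Sum>a\<in>carrier G. f a * h (inv\<^bsub>G\<^esub> a \<otimes>\<^bsub>G\<^esub> g)) else 0)"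

definition ga_s3 :: "('g, 'b) monoid_scheme \<Rightarrow> 'g \<Rightarrow> 'a::field" where
  "ga_s3 G = (\<lambda>g. if g \<in> carrier G \<and> (\<exists>n::nat. group.ord G g = 3 ^ n) then 1 else 0)"

definition ga_Anh :: "('g, 'b) monoid_scheme \<Rightarrow> ('g \<Rightarrow> 'a::field) \<Rightarrow> ('g \<Rightarrow> 'a) set" where
  "ga_Anh G s = {\<alpha> \<in> ga_carrier G. ga_mult G \<alpha> s = ga_zero \<and> ga_mult G s \<alpha> = ga_zero}"

definition ga_ideal :: "('g, 'b) monoid_scheme \<Rightarrow> ('g \<Rightarrow> 'a::field) set \<Rightarrow> bool" where
  "ga_ideal G I \<longleftrightarrow> I \<subseteq> ga_carrier G \<and> ga_zero \<in> I
     \<and> (\<forall>a\<in>I. \<forall>b\<in>I. (\<lambda>g. a g + b g) \<in> I)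
     \<and> (\<forall>a\<in>I. (\<lambda>g. - a g) \<in> I)
     \<and> (\<forall>r\<in>ga_carrier G. \<forall>a\<in>I. ga_mult G r a \<in> I \<and> ga_mult G a r \<in> I)"

definition ga_nilpotent_ideal :: "('g, 'b) monoid_scheme \<Rightarrow> ('g \<Rightarrow> 'a::field) set \<Rightarrow> bool" where
  "ga_nilpotent_ideal G I \<longleftrightarrow> ga_ideal G I \<and>
     (\<exists>n>0. \<forall>xs. length xs = n \<and> set xs \<subseteq> I \<longrightarrow> foldr (ga_mult G) xs (ga_one G) = ga_zero)"

end

theory Submission
  imports Defs
begin

(* The group is the semidirect product of <x>, cyclic of order m = 3k + 1, by <y> of order 3:
   every element is uniquely y^j x^i with j < 3 and i < m, and j is a homomorphism onto Z/3 whose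
   fibres, the cosets of <x>, have m = 1 (mod 3) elements. Since 3 does not divide m, the elements
   of 3-power order are 1 and exactly those with j <> 0 (they have order 3 because m divides
   1 + T + T^2, where y^-1 x y = x^T). Hence s = 1 + (sum of the elements outside <x>).

   Functions on Z/3 lift to FG as functions constant on the cosets of <x>, and because every coset
   has 1 (mod 3) elements, lifting turns the convolution of F[Z/3] into the product of FG. If
   alpha s = 0 then alpha is the lift of some f, and alpha s = s alpha is (f 0 + f 1 + f 2) times the
   lift of the constant 1; so Anh(s) is the lift of the augmentation ideal of F[Z/3]. In
   characteristic 3 that ideal cubes to zero: a product of two of its elements is constant, and a
   constant times an element of the augmentation ideal vanishes. *)

section \<open>Metacyclic groups\<close>

lemma (in group) pow_mod_eq:
  assumes "a \<in> carrier G" "a [^] (m::nat) = \<one>"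
  shows "a [^] (i::nat) = a [^] (i mod m)"
proof -
  have "a [^] i = a [^] (m * (i div m) + i mod m)" by simp
  also have "\<dots> = (a [^] m) [^] (i div m) \<otimes> a [^] (i mod m)"
    using assms(1) by (simp only: nat_pow_pow nat_pow_mult)
  finally show ?thesis using assms by simp
qed

lemma (in group) inv_eq_pow_pred:
  assumes a: "a \<in> carrier G" and "a [^] (m::nat) = \<one>" "0 < m"
  shows "inv a = a [^] (m - 1)"
proof (rule inv_equality)
  have "a [^] (m - 1) \<otimes> a = a [^] Suc (m - 1)" by simp
  then show "a [^] (m - 1) \<otimes> a = \<one>" using assms by simp
qed (use a in simp_all)

lemma (in group) pow_mult_pow_swap:
  assumes x: "x \<in> carrier G" and y: "y \<in> carrier G" and xy: "x \<otimes> y = y \<otimes> x [^] (T::nat)"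
  shows "x [^] (i::nat) \<otimes> y [^] (j::nat) = y [^] j \<otimes> x [^] (i * T ^ j)"
proof -
  have x_pow_y: "x [^] i \<otimes> y = y \<otimes> x [^] (i * T)" for i
  proof (induction i)
    case (Suc i)
    have "x [^] Suc i \<otimes> y = x [^] i \<otimes> (y \<otimes> x [^] T)"
      using x y by (simp add: m_assoc xy)
    also have "\<dots> = (x [^] i \<otimes> y) \<otimes> x [^] T"
      using x y by (simp add: m_assoc)
    also have "\<dots> = y \<otimes> (x [^] (i * T) \<otimes> x [^] T)"
      using x y by (simp add: Suc m_assoc)
    also have "\<dots> = y \<otimes> x [^] (Suc i * T)"
      using x by (simp add: nat_pow_mult add.commute)
    finally show ?case .
  qed (use y in simp)
  show ?thesis
  proof (induction j arbitrary: i)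
    case (Suc j)
    have "x [^] i \<otimes> y [^] Suc j = (x [^] i \<otimes> y [^] j) \<otimes> y"
      using x y by (simp add: m_assoc)
    also have "\<dots> = y [^] j \<otimes> (x [^] (i * T ^ j) \<otimes> y)"
      using x y by (simp add: Suc m_assoc)
    also have "\<dots> = y [^] Suc j \<otimes> x [^] (i * T ^ Suc j)"
      using x y by (simp add: x_pow_y m_assoc[symmetric] nat_pow_Suc2 ac_simps)
    finally show ?case .
  qed (use x in simp)
qed

lemma (in group) int_pow_eq_nat_pow_mod:
  assumes "a \<in> carrier G" "a [^] (m::nat) = \<one>" "0 < m"
  shows "a [^] (t::int) = a [^] nat (t mod int m)"
proof -
  have "int (ord a) dvd int m"
    using assms(1,2) pow_eq_id by simp
  moreover have "int m dvd t mod int m - t"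
    by (simp add: mod_eq_dvd_iff[symmetric])
  ultimately have "a [^] t = a [^] (t mod int m)"
    using int_pow_eq[OF assms(1)] dvd_trans by blast
  also have "\<dots> = a [^] nat (t mod int m)"
    using assms(3) by (simp flip: int_pow_int)
  finally show ?thesis .
qed

lemma (in group) mult_eq_mult_pow_mod:
  assumes "x \<in> carrier G" "y \<in> carrier G" "x [^] (m::nat) = \<one>" "0 < m"
    and "inv y \<otimes> x \<otimes> y = x [^] (t::int)"
  shows "x \<otimes> y = y \<otimes> x [^] nat (t mod int m)"
proof -
  have "x \<otimes> y = y \<otimes> (inv y \<otimes> x \<otimes> y)"
    using assms(1,2) by (simp flip: m_assoc)
  also have "\<dots> = y \<otimes> x [^] t"
    by (simp only: assms(5))
  also have "\<dots> = y \<otimes> x [^] nat (t mod int m)"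
    by (simp only: int_pow_eq_nat_pow_mod[OF assms(1,3,4)])
  finally show ?thesis .
qed

lemma dvd_one_plus_sq_plus_pow4:
  fixes m T :: nat
  assumes "m dvd 1 + T + T^2"
  shows "m dvd 1 + T^2 + T^4"
proof -
  have "(1 + T + T^2) * (1 + T^2) = (1 + T^2 + T^4) + T * (1 + T + T^2)"
    by (simp add: algebra_simps power2_eq_square power4_eq_xxxx)
  then have "m dvd (1 + T^2 + T^4) + T * (1 + T + T^2)"
    using assms by (metis dvd_mult2)
  moreover have "m dvd T * (1 + T + T^2)"
    using assms by (rule dvd_mult)
  ultimately show ?thesis
    using dvd_add_left_iff by blast
qed

lemma dvd_one_plus_root_plus_sq:
  fixes t :: int and m :: nat
  assumes "0 < m" "t ^ 3 mod int m = 1 mod int m" "gcd (int m) (t - 1) = 1"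
  shows "m dvd 1 + nat (t mod int m) + nat (t mod int m) ^ 2"
proof -
  have "int m dvd (t - 1) * (1 + t + t^2)"
    using assms(2) mod_eq_dvd_iff[of "t^3"] by (simp add: algebra_simps power2_eq_square power3_eq_cube)
  then have "int m dvd 1 + t + t^2"
    using assms(3) by (simp add: coprime_dvd_mult_right_iff coprime_iff_gcd_eq_1)
  moreover have "(1 + t mod int m + (t mod int m)^2) mod int m = (1 + t + t^2) mod int m"
    by (intro mod_add_cong refl) (simp_all add: power_mod)
  ultimately have "int m dvd 1 + t mod int m + (t mod int m)^2"
    by (metis dvd_eq_mod_eq_0)
  moreover have "int (1 + nat (t mod int m) + nat (t mod int m) ^ 2) = 1 + t mod int m + (t mod int m)^2"
    using assms(1) by simp
  ultimately show ?thesis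
    by (metis int_dvd_int_iff)
qed

locale metacyclic_group = group +
  fixes x y :: 'a and m n T :: nat
  assumes x_closed [simp]: "x \<in> carrier G" and y_closed [simp]: "y \<in> carrier G"
    and generated: "generate G {x, y} = carrier G"
    and x_pow_m: "x [^] m = \<one>" and y_pow_n: "y [^] n = \<one>"
    and x_y_comm: "x \<otimes> y = y \<otimes> x [^] T"
    and order_eq: "order G = n * m"
    and m_pos: "0 < m" and n_pos: "0 < n"
begin

definition word :: "nat \<Rightarrow> nat \<Rightarrow> 'a" where
  "word j i = y [^] j \<otimes> x [^] i"

abbreviation words :: "nat \<times> nat \<Rightarrow> 'a" where
  "words \<equiv> case_prod word"

abbreviation exponents :: "(nat \<times> nat) set" where
  "exponents \<equiv> {..<n} \<times> {..<m}"

lemma word_closed [simp]: "word j i \<in> carrier G"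
  by (simp add: word_def)

lemma word_mult: "word j i \<otimes> word l k = word (j + l) (i * T ^ l + k)"
proof -
  have "word j i \<otimes> word l k = y [^] j \<otimes> (x [^] i \<otimes> y [^] l) \<otimes> x [^] k"
    by (simp add: word_def m_assoc)
  also have "\<dots> = (y [^] j \<otimes> y [^] l) \<otimes> (x [^] (i * T ^ l) \<otimes> x [^] k)"
    by (simp add: pow_mult_pow_swap[OF x_closed y_closed x_y_comm] m_assoc)
  also have "\<dots> = word (j + l) (i * T ^ l + k)"
    by (simp add: word_def nat_pow_mult)
  finally show ?thesis .
qed

lemma word_mod: "word j i = word (j mod n) (i mod m)"
  unfolding word_def using pow_mod_eq[OF x_closed x_pow_m] pow_mod_eq[OF y_closed y_pow_n] by simp

lemma word_mod_in_exponents: "(j mod n, i mod m) \<in> exponents"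
  using m_pos n_pos by simp

lemma carrier_eq_words: "carrier G = words ` exponents"
proof
  have generated_words: "g \<in> range words" if "g \<in> generate G {x, y}" for g
    using that
  proof (induction rule: generate.induct)
    case one
    show ?case by (rule range_eqI[of _ _ "(0, 0)"]) (simp add: word_def)
  next
    case (incl h)
    then show ?case
      by (auto intro: range_eqI[of _ _ "(0, 1)"] range_eqI[of _ _ "(1, 0)"] simp: word_def)
  next
    case (inv h)
    have "inv x = words (0, m - 1)" "inv y = words (n - 1, 0)"
      using inv_eq_pow_pred[OF x_closed x_pow_m m_pos] inv_eq_pow_pred[OF y_closed y_pow_n n_pos]
      by (simp_all add: word_def)
    with inv show ?case by (metis insertE rangeI singletonD)
  next
    case (eng g h)
    then obtain a b c d where "g = word a b" "h = word c d"
      by auto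
    then have "g \<otimes> h = words (a + c, b * T ^ c + d)"
      by (simp add: word_mult)
    then show ?case
      by blast
  qed
  show "carrier G \<subseteq> words ` exponents"
  proof
    fix g assume "g \<in> carrier G"
    then obtain p where "g = words p"
      using generated_words generated by blast
    then obtain j i where "g = word j i"
      by (cases p) simp
    then have "g = words (j mod n, i mod m)"
      by (simp add: word_mod[of j i])
    then show "g \<in> words ` exponents"
      using word_mod_in_exponents by blast
  qed
qed auto

lemma bij_betw_words: "bij_betw words exponents (carrier G)"
proof -
  have "card exponents = card (carrier G)"
    using order_eq by (simp add: order_def)
  then show ?thesis
    by (simp add: bij_betw_def carrier_eq_words eq_card_imp_inj_on)
qed

definition y_exponent :: "'a \<Rightarrow> nat" where
  "y_exponent g = fst (the_inv_into exponents words g)"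

lemma y_exponent_word [simp]: "y_exponent (word j i) = j mod n"
proof -
  have "y_exponent (word j i) = fst (the_inv_into exponents words (words (j mod n, i mod m)))"
    by (simp add: y_exponent_def word_mod[of j i])
  also have "\<dots> = j mod n"
    using the_inv_into_f_f[OF bij_betw_imp_inj_on[OF bij_betw_words] word_mod_in_exponents] by simp
  finally show ?thesis .
qed

lemma y_exponent_one [simp]: "y_exponent \<one> = 0"
  using y_exponent_word[of 0 0] by (simp add: word_def)

lemma carrier_wordE:
  assumes "g \<in> carrier G"
  obtains j i where "j < n" "i < m" "g = word j i"
  using assms carrier_eq_words by auto

lemma y_exponent_lt: "g \<in> carrier G \<Longrightarrow> y_exponent g < n"
  by (metis carrier_wordE y_exponent_word mod_less)

lemma y_exponent_mult:
  assumes "g \<in> carrier G" "h \<in> carrier G"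
  shows "y_exponent (g \<otimes> h) = (y_exponent g + y_exponent h) mod n"
proof -
  obtain j i l k where "g = word j i" "h = word l k"
    using assms by (metis carrier_wordE)
  then show ?thesis
    by (simp add: word_mult mod_add_eq)
qed

lemma card_y_exponent_fiber:
  assumes "j < n"
  shows "card {g \<in> carrier G. y_exponent g = j} = m"
proof -
  have fiber: "{g \<in> carrier G. y_exponent g = j} = word j ` {..<m}"
    using assms by (auto elim!: carrier_wordE)
  have "inj_on (word j) {..<m}"
  proof (rule inj_onI)
    fix i k assume "i \<in> {..<m}" "k \<in> {..<m}" "word j i = word j k"
    then show "i = k"
      using inj_onD[OF bij_betw_imp_inj_on[OF bij_betw_words], of "(j, i)" "(j, k)"] assms by auto
  qed
  then show ?thesis
    by (simp add: fiber card_image)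
qed

lemma pow_m_eq_one_if_y_exponent_0:
  assumes "g \<in> carrier G" "y_exponent g = 0"
  shows "g [^] m = \<one>"
proof -
  obtain j i where "j < n" "g = word j i"
    using assms(1) by (rule carrier_wordE)
  have "j = 0"
    using assms(2) \<open>j < n\<close> \<open>g = word j i\<close> by simp
  with \<open>g = word j i\<close> have "g = x [^] i"
    by (simp add: word_def)
  then have "g [^] m = (x [^] m) [^] i"
    by (simp add: nat_pow_pow mult.commute)
  then show ?thesis
    by (simp add: x_pow_m)
qed

end

locale t3m_group = metacyclic_group G x y m 3 T for G (structure) and x y m T +
  assumes m_dvd: "m dvd 1 + T + T^2" and not_3_dvd_m: "\<not> 3 dvd m"
begin

lemma pow_3_eq_one_if_y_exponent_nonzero:
  assumes "g \<in> carrier G" "y_exponent g \<noteq> 0"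
  shows "g [^] (3::nat) = \<one>"
proof -
  obtain j i where j: "j < 3" and g: "g = word j i"
    using assms(1) by (rule carrier_wordE)
  have "j = 1 \<or> j = 2"
    using assms(2) j g by auto
  then have "m dvd 1 + T ^ j + T ^ (2 * j)"
    using m_dvd dvd_one_plus_sq_plus_pow4[OF m_dvd] by (auto simp: power2_eq_square)
  then have "m dvd i * (1 + T ^ j + T ^ (2 * j))"
    by (rule dvd_mult)
  moreover have "g [^] (3::nat) = word (3 * j) (i * (1 + T ^ j + T ^ (2 * j)))"
    by (simp add: g numeral_3_eq_3 word_mult algebra_simps power_add power_mult flip: power2_eq_square)
  ultimately show ?thesis
    using word_mod[of "3 * j"] by (simp add: word_def)
qed

lemma three_power_order_iff:
  assumes "g \<in> carrier G"
  shows "(\<exists>k. ord g = 3 ^ k) \<longleftrightarrow> g = \<one> \<or> y_exponent g \<noteq> 0"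
proof (cases "y_exponent g = 0")
  case True
  have "ord g dvd m"
    using pow_m_eq_one_if_y_exponent_0[OF assms True] assms pow_eq_id by blast
  then have "ord g = 3 ^ k \<longleftrightarrow> k = 0 \<and> g = \<one>" for k
    using not_3_dvd_m ord_eq_1[OF assms] by (cases k) (auto dest: dvd_trans[rotated])
  then show ?thesis
    using True by auto
next
  case False
  have "ord g dvd 3" "ord g \<noteq> 1"
    using pow_3_eq_one_if_y_exponent_nonzero[OF assms False] assms pow_eq_id ord_eq_1 False
    by auto
  moreover have "d dvd 3 \<Longrightarrow> d \<noteq> 1 \<Longrightarrow> d = (3::nat)" for d
    using dvd_imp_le[of d 3] by (auto simp: le_Suc_eq numeral_3_eq_3 dvd_def) presburger
  ultimately have "ord g = 3 ^ 1"
    by simp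
  then show ?thesis
    using False by blast
qed

end

section \<open>Convolution on Z/3\<close>

(* Multiplication in the group algebra of Z/3 = {0, 1, 2}; only the values at 0, 1, 2 matter. *)
definition conv3 :: "(nat \<Rightarrow> 'k::comm_ring_1) \<Rightarrow> (nat \<Rightarrow> 'k) \<Rightarrow> nat \<Rightarrow> 'k" where
  "conv3 f h j = (\<Sum>i<3. f i * h ((j + 3 - i) mod 3))"

lemma sum_lessThan_3: "(\<Sum>i<3. F i) = F 0 + F 1 + F 2" for F :: "nat \<Rightarrow> 'k::comm_monoid_add"
  by (simp add: eval_nat_numeral)

lemma conv3_simps:
  "conv3 f h 0 = f 0 * h 0 + f 1 * h 2 + f 2 * h 1"
  "conv3 f h 1 = f 0 * h 1 + f 1 * h 0 + f 2 * h 2"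
  "conv3 f h 2 = f 0 * h 2 + f 1 * h 1 + f 2 * h 0"
  by (simp_all add: conv3_def sum_lessThan_3)

lemma less_3_cases: "j < 3 \<Longrightarrow> j = 0 \<or> j = 1 \<or> j = (2::nat)"
  by auto

lemma sum_rotate3:
  fixes h :: "nat \<Rightarrow> 'k::comm_monoid_add"
  assumes "i < 3"
  shows "(\<Sum>j<3. h ((j + 3 - i) mod 3)) = (\<Sum>j<3. h j)"
  using less_3_cases[OF assms] by (auto simp: sum_lessThan_3 ac_simps)

abbreviation nonzero_indicator :: "nat \<Rightarrow> 'k::comm_ring_1" where
  "nonzero_indicator \<equiv> \<lambda>j. if j = 0 then 0 else 1"

lemma conv3_indicator_right:
  assumes "j < 3"
  shows "f j + conv3 f nonzero_indicator j = (\<Sum>i<3. f i)"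
  using less_3_cases[OF assms] by (elim disjE) (simp_all add: conv3_def sum_lessThan_3)

lemma conv3_indicator_left:
  assumes "j < 3"
  shows "f j + conv3 nonzero_indicator f j = (\<Sum>i<3. f i)"
  using less_3_cases[OF assms] by (elim disjE) (simp_all add: conv3_def sum_lessThan_3)

(* The augmentation ideal of F[Z/3] is generated by 1 - y, and (1 - y)^2 = 1 + y + y^2 in
   characteristic 3. *)
lemma conv3_const_if_zero_sums:
  fixes h l :: "nat \<Rightarrow> 'k::comm_ring_1"
  assumes "(3::'k) = 0" "(\<Sum>j<3. h j) = 0" "(\<Sum>j<3. l j) = 0" "j < 3"
  shows "conv3 h l j = conv3 h l 0"
proof -
  have h2: "h 2 = - h 0 - h 1" and l2: "l 2 = - l 0 - l 1"
    using assms(2,3) unfolding sum_lessThan_3 by (simp_all add: eq_neg_iff_add_eq_0 algebra_simps)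
  have "conv3 h l 1 - conv3 h l 0 = 3 * (h 0 * l 1 + h 1 * l 0 + h 1 * l 1)"
    unfolding conv3_simps h2 l2 by (simp add: algebra_simps)
  moreover have "conv3 h l 2 - conv3 h l 0 = 3 * (h 1 * l 1 - h 0 * l 0)"
    unfolding conv3_simps h2 l2 by (simp add: algebra_simps)
  ultimately show ?thesis
    using less_3_cases[OF assms(4)] assms(1) by (elim disjE) simp_all
qed

lemma conv3_conv3_eq_0:
  fixes f h l :: "nat \<Rightarrow> 'k::comm_ring_1"
  assumes "(3::'k) = 0" "(\<Sum>j<3. f j) = 0" "(\<Sum>j<3. h j) = 0" "(\<Sum>j<3. l j) = 0"
  shows "conv3 f (conv3 h l) j = 0"
proof -
  have "conv3 h l ((j + 3 - i) mod 3) = conv3 h l 0" for i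
    by (rule conv3_const_if_zero_sums[OF assms(1,3,4)]) simp
  then have "conv3 f (conv3 h l) j = (\<Sum>i<3. f i * conv3 h l 0)"
    unfolding conv3_def[of f] by (simp only:)
  also have "\<dots> = 0"
    using assms(2) by (simp flip: sum_distrib_right)
  finally show ?thesis .
qed

section \<open>Group algebras graded by Z/3\<close>

lemma ga_mult_add_right:
  "ga_mult G \<alpha> (\<lambda>g. \<beta> g + \<gamma> g) = (\<lambda>g. ga_mult G \<alpha> \<beta> g + ga_mult G \<alpha> \<gamma> g)"
  by (simp add: ga_mult_def distrib_left sum.distrib fun_eq_iff)

lemma ga_mult_add_left:
  "ga_mult G (\<lambda>g. \<alpha> g + \<beta> g) \<gamma> = (\<lambda>g. ga_mult G \<alpha> \<gamma> g + ga_mult G \<beta> \<gamma> g)"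
  by (simp add: ga_mult_def distrib_right sum.distrib fun_eq_iff)

context group
begin

lemma inv_mult_eq_one_iff:
  "a \<in> carrier G \<Longrightarrow> g \<in> carrier G \<Longrightarrow> inv a \<otimes> g = \<one> \<longleftrightarrow> a = g"
  by (metis inv_closed inv_equality inv_inv r_inv)

lemma ga_mult_one_right:
  assumes "finite (carrier G)" "\<alpha> \<in> ga_carrier G"
  shows "ga_mult G \<alpha> (ga_one G) = \<alpha>"
proof
  fix g
  show "ga_mult G \<alpha> (ga_one G) g = \<alpha> g"
  proof (cases "g \<in> carrier G")
    case True
    then have "ga_mult G \<alpha> (ga_one G) g = (\<Sum>a\<in>carrier G. if a = g then \<alpha> a else 0)"
      by (auto simp: ga_mult_def ga_one_def inv_mult_eq_one_iff intro!: sum.cong)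
    with True show ?thesis
      using assms(1) by simp
  qed (use assms(2) in \<open>simp add: ga_mult_def ga_carrier_def\<close>)
qed

lemma ga_mult_one_left:
  assumes "finite (carrier G)" "\<beta> \<in> ga_carrier G"
  shows "ga_mult G (ga_one G) \<beta> = \<beta>"
proof
  fix g
  show "ga_mult G (ga_one G) \<beta> g = \<beta> g"
  proof (cases "g \<in> carrier G")
    case True
    then have "ga_mult G (ga_one G) \<beta> g = (\<Sum>a\<in>carrier G. if a = \<one> then \<beta> (inv a \<otimes> g) else 0)"
      by (auto simp: ga_mult_def ga_one_def intro!: sum.cong)
    with True show ?thesis
      using assms(1) by simp
  qed (use assms(2) in \<open>simp add: ga_mult_def ga_carrier_def\<close>)
qed

end

locale graded_group3 = group +
  fixes grade :: "'a \<Rightarrow> nat"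
  assumes finite_carrier: "finite (carrier G)"
    and grade_lt: "g \<in> carrier G \<Longrightarrow> grade g < 3"
    and grade_mult: "g \<in> carrier G \<Longrightarrow> h \<in> carrier G \<Longrightarrow> grade (g \<otimes> h) = (grade g + grade h) mod 3"
    and card_grade_fiber: "j < 3 \<Longrightarrow> card {g \<in> carrier G. grade g = j} mod 3 = 1"
begin

lemma grade_cases:
  assumes "g \<in> carrier G"
  shows "grade g = 0 \<or> grade g = 1 \<or> grade g = 2"
  using less_3_cases[OF grade_lt[OF assms]] .

lemma grade_one: "grade \<one> = 0"
proof -
  have "grade \<one> = (grade \<one> + grade \<one>) mod 3"
    using grade_mult[of \<one> \<one>] by simp
  with grade_cases[OF one_closed] show ?thesis
    by (elim disjE) simp_all
qed

lemma grade_inv: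
  assumes "a \<in> carrier G"
  shows "grade (inv a) = (3 - grade a) mod 3"
proof -
  have "(grade (inv a) + grade a) mod 3 = 0"
    using assms grade_mult[of "inv a" a] grade_one by simp
  with grade_cases[OF assms] grade_cases[OF inv_closed[OF assms]] show ?thesis
    by (elim disjE) simp_all
qed

lemma grade_inv_mult:
  assumes "a \<in> carrier G" "g \<in> carrier G"
  shows "grade (inv a \<otimes> g) = (grade g + 3 - grade a) mod 3"
proof -
  have "grade (inv a \<otimes> g) = (3 - grade a + grade g) mod 3"
    using assms by (simp add: grade_mult grade_inv mod_add_left_eq)
  then show ?thesis
    using grade_lt[OF assms(1)] by (simp add: add.commute)
qed

lemma grade_mult_inv:
  assumes "g \<in> carrier G" "b \<in> carrier G"
  shows "grade (g \<otimes> inv b) = (grade g + 3 - grade b) mod 3"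
proof -
  have "grade (g \<otimes> inv b) = (grade g + (3 - grade b)) mod 3"
    using assms by (simp add: grade_mult grade_inv mod_add_right_eq)
  then show ?thesis
    using grade_lt[OF assms(2)] by simp
qed

definition lift :: "(nat \<Rightarrow> 'k::field) \<Rightarrow> 'a \<Rightarrow> 'k" where
  "lift f g = (if g \<in> carrier G then f (grade g) else 0)"

lemma lift_in_carrier: "lift f \<in> ga_carrier G"
  by (simp add: lift_def ga_carrier_def)

lemma lift_zero: "lift (\<lambda>_. 0) = ga_zero"
  by (simp add: ga_zero_def lift_def fun_eq_iff)

lemma lift_cong: "(\<And>j. j < 3 \<Longrightarrow> f j = h j) \<Longrightarrow> lift f = lift h"
  by (auto simp: lift_def grade_lt fun_eq_iff)

lemma lift_add: "(\<lambda>g. lift f g + lift h g) = lift (\<lambda>j. f j + h j)"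
  by (simp add: lift_def fun_eq_iff)

lemma mult_lift_right:
  "ga_mult G r (lift h) = lift (\<lambda>j. \<Sum>a\<in>carrier G. r a * h ((j + 3 - grade a) mod 3))"
  by (auto simp: ga_mult_def lift_def grade_inv_mult fun_eq_iff intro!: sum.cong)

lemma mult_lift_left:
  "ga_mult G (lift f) r = lift (\<lambda>j. \<Sum>b\<in>carrier G. f ((j + 3 - grade b) mod 3) * r b)"
proof
  fix g
  show "ga_mult G (lift f) r g = lift (\<lambda>j. \<Sum>b\<in>carrier G. f ((j + 3 - grade b) mod 3) * r b) g"
  proof (cases "g \<in> carrier G")
    case True
    have left: "g \<otimes> inv (inv a \<otimes> g) = a" if "a \<in> carrier G" for a
      using that True by (simp add: inv_mult_group flip: m_assoc)
    have right: "inv (g \<otimes> inv b) \<otimes> g = b" if "b \<in> carrier G" for b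
      using that True by (simp add: inv_mult_group m_assoc)
    have "(\<Sum>a\<in>carrier G. lift f a * r (inv a \<otimes> g)) = (\<Sum>b\<in>carrier G. lift f (g \<otimes> inv b) * r b)"
      by (rule sum.reindex_bij_witness[of _ "\<lambda>b. g \<otimes> inv b" "\<lambda>a. inv a \<otimes> g"])
        (use True left right in auto)
    with True show ?thesis
      by (simp add: ga_mult_def lift_def grade_mult_inv cong: sum.cong)
  qed (simp add: ga_mult_def lift_def)
qed

(* The element s: by three_power_order_iff the elements of 3-power order are 1 and those of
   nonzero grade. *)
definition sum_one_nonzero_grade :: "'a \<Rightarrow> 'k::field" where
  "sum_one_nonzero_grade g = (if g \<in> carrier G \<and> (g = \<one> \<or> grade g \<noteq> 0) then 1 else 0)"

definition graded_augmentation :: "('a \<Rightarrow> 'k::field) set" where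
  "graded_augmentation = lift ` {f. (\<Sum>j<3. f j) = 0}"

lemma sum_mult_lift_zero:
  assumes "(\<Sum>j<3. h j) = 0"
  shows "(\<Sum>j<3. \<Sum>a\<in>carrier G. r a * h ((j + 3 - grade a) mod 3)) = (0::'k::field)"
proof -
  have "(\<Sum>j<3. \<Sum>a\<in>carrier G. r a * h ((j + 3 - grade a) mod 3))
      = (\<Sum>a\<in>carrier G. r a * (\<Sum>j<3. h ((j + 3 - grade a) mod 3)))"
    by (subst sum.swap) (simp add: sum_distrib_left)
  also have "\<dots> = 0"
    using assms by (simp add: sum_rotate3 grade_lt cong: sum.cong)
  finally show ?thesis .
qed

lemma mult_graded_augmentation:
  assumes "\<alpha> \<in> graded_augmentation"
  shows "ga_mult G r \<alpha> \<in> graded_augmentation" and "ga_mult G \<alpha> r \<in> graded_augmentation"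
proof -
  obtain h where \<alpha>: "\<alpha> = lift h" and h: "(\<Sum>j<3. h j) = 0"
    using assms by (auto simp: graded_augmentation_def)
  show "ga_mult G r \<alpha> \<in> graded_augmentation"
    unfolding \<alpha> mult_lift_right graded_augmentation_def using sum_mult_lift_zero[OF h] by blast
  have "(\<Sum>j<3. \<Sum>b\<in>carrier G. h ((j + 3 - grade b) mod 3) * r b) = 0"
    using sum_mult_lift_zero[OF h, of r] by (simp add: mult.commute)
  then show "ga_mult G \<alpha> r \<in> graded_augmentation"
    unfolding \<alpha> mult_lift_left graded_augmentation_def by blast
qed

lemma ideal_graded_augmentation: "ga_ideal G (graded_augmentation :: ('a \<Rightarrow> 'k::field) set)"
  unfolding ga_ideal_def
proof (intro conjI ballI)
  show "graded_augmentation \<subseteq> ga_carrier G"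
    by (auto simp: graded_augmentation_def lift_in_carrier)
  show "ga_zero \<in> graded_augmentation"
    unfolding graded_augmentation_def lift_zero[symmetric] by auto
  fix \<alpha> :: "'a \<Rightarrow> 'k"
  assume \<alpha>: "\<alpha> \<in> graded_augmentation"
  then obtain f where f: "\<alpha> = lift f" "(\<Sum>j<3. f j) = 0"
    by (auto simp: graded_augmentation_def)
  have "(\<lambda>g. - \<alpha> g) = lift (\<lambda>j. - f j)"
    by (simp add: f lift_def fun_eq_iff)
  with f(2) show "(\<lambda>g. - \<alpha> g) \<in> graded_augmentation"
    by (auto simp: graded_augmentation_def sum_negf)
  show "(\<lambda>g. \<alpha> g + \<beta> g) \<in> graded_augmentation" if \<beta>: "\<beta> \<in> graded_augmentation" for \<beta>
  proof -
    obtain h where h: "\<beta> = lift h" "(\<Sum>j<3. h j) = 0"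
      using \<beta> by (auto simp: graded_augmentation_def)
    show ?thesis
      using f h by (auto simp: graded_augmentation_def lift_add sum.distrib)
  qed
  show "ga_mult G r \<alpha> \<in> graded_augmentation" "ga_mult G \<alpha> r \<in> graded_augmentation" for r
    using mult_graded_augmentation[OF \<alpha>] by blast+
qed

context
  assumes char_3: "CHAR('k::field) = 3"
begin

lemma three_eq_zero: "(3::'k) = 0"
  using of_nat_CHAR[where 'a='k] char_3 by simp

lemma of_nat_card_grade_fiber:
  assumes "j < 3"
  shows "of_nat (card {g \<in> carrier G. grade g = j}) = (1::'k)"
proof -
  let ?c = "card {g \<in> carrier G. grade g = j}"
  have "(of_nat ?c :: 'k) = of_nat (?c div 3 * 3 + ?c mod 3)"
    by simp
  also have "\<dots> = 1"
    by (simp only: of_nat_add of_nat_mult of_nat_numeral three_eq_zero card_grade_fiber[OF assms]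
        mult_zero_right add_0 of_nat_1)
  finally show ?thesis .
qed

(* Every fibre has 1 (mod 3) elements, so in characteristic 3 it counts exactly once. *)
lemma sum_over_grades: "(\<Sum>g\<in>carrier G. F (grade g)) = (\<Sum>j<3. F j :: 'k)"
proof -
  have "(\<Sum>g\<in>carrier G. F (grade g)) = (\<Sum>j<3. \<Sum>g\<in>{g \<in> carrier G. grade g = j}. F (grade g))"
    by (rule sum.group[symmetric]) (use finite_carrier grade_lt in auto)
  also have "\<dots> = (\<Sum>j<3. of_nat (card {g \<in> carrier G. grade g = j}) * F j)"
    by (intro sum.cong refl) simp
  also have "\<dots> = (\<Sum>j<3. F j)"
    by (intro sum.cong refl) (simp add: of_nat_card_grade_fiber)
  finally show ?thesis .
qed

lemma lift_mult_lift: "ga_mult G (lift f) (lift h) = lift (conv3 f h :: nat \<Rightarrow> 'k)"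
proof -
  have "(\<Sum>a\<in>carrier G. lift f a * h ((j + 3 - grade a) mod 3)) = conv3 f h j" for j
  proof -
    have "(\<Sum>a\<in>carrier G. lift f a * h ((j + 3 - grade a) mod 3))
        = (\<Sum>a\<in>carrier G. f (grade a) * h ((j + 3 - grade a) mod 3))"
      by (rule sum.cong) (simp_all add: lift_def)
    also have "\<dots> = conv3 f h j"
      unfolding conv3_def by (rule sum_over_grades)
    finally show ?thesis .
  qed
  then show ?thesis
    by (simp add: mult_lift_right)
qed

lemma sum_one_nonzero_grade_eq: "sum_one_nonzero_grade = (\<lambda>g. ga_one G g + lift nonzero_indicator g)"
  by (auto simp: sum_one_nonzero_grade_def ga_one_def lift_def grade_one fun_eq_iff)

lemma lift_mult_sum_one_nonzero_grade: "ga_mult G (lift f) sum_one_nonzero_grade = lift (\<lambda>_. \<Sum>j<3. f j)"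
  for f :: "nat \<Rightarrow> 'k"
proof -
  have "ga_mult G (lift f) sum_one_nonzero_grade = (\<lambda>g. lift f g + lift (conv3 f nonzero_indicator) g)"
    unfolding sum_one_nonzero_grade_eq
    by (simp add: ga_mult_add_right ga_mult_one_right[OF finite_carrier lift_in_carrier] lift_mult_lift)
  also have "\<dots> = lift (\<lambda>_. \<Sum>j<3. f j)"
    unfolding lift_add by (rule lift_cong) (rule conv3_indicator_right)
  finally show ?thesis .
qed

lemma sum_one_nonzero_grade_mult_lift: "ga_mult G sum_one_nonzero_grade (lift f) = lift (\<lambda>_. \<Sum>j<3. f j)"
  for f :: "nat \<Rightarrow> 'k"
proof -
  have "ga_mult G sum_one_nonzero_grade (lift f) = (\<lambda>g. lift f g + lift (conv3 nonzero_indicator f) g)"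
    unfolding sum_one_nonzero_grade_eq
    by (simp add: ga_mult_add_left ga_mult_one_left[OF finite_carrier lift_in_carrier] lift_mult_lift)
  also have "\<dots> = lift (\<lambda>_. \<Sum>j<3. f j)"
    unfolding lift_add by (rule lift_cong) (rule conv3_indicator_left)
  finally show ?thesis .
qed

lemma lift_const_eq_zero_iff: "lift (\<lambda>_. c) = ga_zero \<longleftrightarrow> c = (0::'k)"
  by (auto simp: lift_def ga_zero_def fun_eq_iff)

lemma right_annihilator_in_range_lift:
  fixes \<alpha> :: "'a \<Rightarrow> 'k"
  assumes "\<alpha> \<in> ga_carrier G" "ga_mult G \<alpha> sum_one_nonzero_grade = ga_zero"
  shows "\<alpha> \<in> range lift"
proof -
  have "(\<lambda>g. \<alpha> g + ga_mult G \<alpha> (lift nonzero_indicator) g) = ga_zero"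
    using assms unfolding sum_one_nonzero_grade_eq
    by (simp add: ga_mult_add_right ga_mult_one_right[OF finite_carrier])
  then have "\<alpha> = (\<lambda>g. - ga_mult G \<alpha> (lift nonzero_indicator) g)"
    by (auto simp: ga_zero_def fun_eq_iff eq_neg_iff_add_eq_0)
  also have "\<dots> = lift (\<lambda>j. - (\<Sum>a\<in>carrier G. \<alpha> a * nonzero_indicator ((j + 3 - grade a) mod 3)))"
    by (simp add: mult_lift_right lift_def fun_eq_iff)
  finally show ?thesis
    by blast
qed

theorem ga_Anh_eq_graded_augmentation:
  "ga_Anh G sum_one_nonzero_grade = (graded_augmentation :: ('a \<Rightarrow> 'k) set)"
proof (intro equalityI subsetI)
  fix \<alpha> :: "'a \<Rightarrow> 'k"
  assume "\<alpha> \<in> ga_Anh G sum_one_nonzero_grade"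
  then have \<alpha>: "\<alpha> \<in> ga_carrier G" "ga_mult G \<alpha> sum_one_nonzero_grade = ga_zero"
    by (simp_all add: ga_Anh_def)
  then obtain f where "\<alpha> = lift f"
    using right_annihilator_in_range_lift[OF \<alpha>] by blast
  with \<alpha>(2) have "(\<Sum>j<3. f j) = 0"
    by (simp add: lift_mult_sum_one_nonzero_grade lift_const_eq_zero_iff)
  with \<open>\<alpha> = lift f\<close> show "\<alpha> \<in> graded_augmentation"
    by (simp add: graded_augmentation_def)
next
  fix \<alpha> :: "'a \<Rightarrow> 'k"
  assume "\<alpha> \<in> graded_augmentation"
  then show "\<alpha> \<in> ga_Anh G sum_one_nonzero_grade"
    by (auto simp: graded_augmentation_def ga_Anh_def lift_in_carrier lift_zero
        lift_mult_sum_one_nonzero_grade sum_one_nonzero_grade_mult_lift)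
qed

theorem nilpotent_graded_augmentation:
  "ga_nilpotent_ideal G (graded_augmentation :: ('a \<Rightarrow> 'k) set)"
  unfolding ga_nilpotent_ideal_def
proof (intro conjI exI[of _ 3] allI impI)
  fix xs :: "('a \<Rightarrow> 'k) list"
  assume "length xs = 3 \<and> set xs \<subseteq> graded_augmentation"
  then obtain f h l where xs: "xs = [lift f, lift h, lift l]"
    and "(\<Sum>j<3. f j) = 0" "(\<Sum>j<3. h j) = 0" "(\<Sum>j<3. l j) = 0"
    by (auto simp: graded_augmentation_def numeral_3_eq_3 length_Suc_conv)
  then have "lift (conv3 f (conv3 h l)) = lift (\<lambda>_. 0)"
    by (intro lift_cong conv3_conv3_eq_0 three_eq_zero)
  then show "foldr (ga_mult G) xs (ga_one G) = ga_zero"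
    by (simp add: xs ga_mult_one_right[OF finite_carrier lift_in_carrier] lift_mult_lift lift_zero)
qed (simp_all add: ideal_graded_augmentation)

end

end

theorem proposition3p3:
  fixes G :: "('g, 'b) monoid_scheme" (structure)
    and x y :: 'g and k :: nat and t :: int
  assumes "finite (UNIV :: 'a::field set)"
    and "CHAR('a) = 3"
    and "group G"
    and "t ^ 3 mod int (3 * k + 1) = 1 mod int (3 * k + 1)"
    and "gcd (int (3 * k + 1)) (t - 1) = 1"
    and "x \<in> carrier G" and "y \<in> carrier G"
    and "generate G {x, y} = carrier G"
    and "x [^] (3 * k + 1) = \<one>"
    and "y [^] (3::nat) = \<one>"
    and "inv y \<otimes> x \<otimes> y = x [^] t"
    and "order G = 3 * (3 * k + 1)"
  shows "ga_nilpotent_ideal G (ga_Anh G (ga_s3 G :: 'g \<Rightarrow> 'a))"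
proof -
  interpret group G by (rule assms(3))
  define m where "m = 3 * k + 1"
  define T where "T = nat (t mod int m)"
  have m_pos: "0 < m" and x_pow_m: "x [^] m = \<one>"
    using assms(9) by (simp_all add: m_def)
  have "x \<otimes> y = y \<otimes> x [^] T"
    using mult_eq_mult_pow_mod[OF assms(6,7) x_pow_m m_pos assms(11)] by (simp add: T_def)
  moreover have "m dvd 1 + T + T^2"
    using dvd_one_plus_root_plus_sq[OF m_pos] assms(4,5) by (simp add: m_def T_def)
  moreover have "\<not> 3 dvd m"
    unfolding m_def by presburger
  ultimately interpret t3m_group G x y m T
    by unfold_locales (use assms x_pow_m m_pos in \<open>simp_all add: m_def\<close>)
  interpret graded_group3 G y_exponent
  proof unfold_locales
    show "finite (carrier G)"
      using order_eq m_pos by (simp flip: order_gt_0_iff_finite)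
    show "card {g \<in> carrier G. y_exponent g = j} mod 3 = 1" if "j < 3" for j
      using card_y_exponent_fiber[OF that] by (simp add: m_def)
  qed (simp_all add: y_exponent_lt y_exponent_mult)
  have "(ga_s3 G :: 'g \<Rightarrow> 'a) = sum_one_nonzero_grade"
    by (simp add: ga_s3_def sum_one_nonzero_grade_def three_power_order_iff fun_eq_iff cong: conj_cong)
  then show ?thesis
    using nilpotent_graded_augmentation[OF assms(2)] ga_Anh_eq_graded_augmentation[OF assms(2)] by simp
qed

end
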